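(* Consider the problem of minimizing $\pmb{c}^T\pmb{x}$ subject to $\pmb{x}\in\mathbb{X}$ and, for each $r\in[m]$, the constraint $$\sup_{\mathrm{P}\in\mathcal{P}^{\ell}(\pi_r)}\mathbf{E}_{\mathrm{P}}[\tilde{\pmb{a}}_r^T\pmb{x}]\le b_r,$$ where for each $r$ the joint possibility distribution $\pi_r$ on $\mathbb{R}^n$ and the ambiguity set $\mathcal{P}^{\ell}(\pi_r)$ are constructed as in the context (with data $\hat{\pmb{a}}^r$, $\underline a^r_j,\overline a^r_j$, $\pi_{\tilde a^r_j}$, $\Gamma_r$, $\pi_{\tilde\delta_r}$, $\pmb{B}^r$ depending on $r$). If $\mathbb{X}\subseteq\mathbb{R}^n$ is a polyhedron described by a finite system of linear constraints, then this problem is equivalent to a second-order cone program (in $\pmb{x}$ and finitely many auxiliary variables).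
   Context: $\pmb{c}\in\mathbb{R}^n$, $\pmb{b}\in\mathbb{R}^m$, $\ell\ge1$ an integer, $\Lambda=\{0,\dots,\ell\}$, $\lambda_i=i/\ell$. For one constraint the construction is: for each $j\in[n]$, $\hat a_j\in\mathbb{R}$, $\underline a_j,\overline a_j>0$, and $\pi_{\tilde a_j}:\mathbb{R}\to[0,1]$ continuous with $\pi_{\tilde a_j}(\hat a_j)=1$, zero outside $(\hat a_j-\underline a_j,\hat a_j+\overline a_j)$, strictly increasing on $[\hat a_j-\underline a_j,\hat a_j]$, strictly decreasing on $[\hat a_j,\hat a_j+\overline a_j]$; $[\underline a_j(\lambda),\overline a_j(\lambda)]=\{t:\pi_{\tilde a_j}(t)\ge\lambda\}$ for $\lambda\in(0,1]$, $\underline a_j(0)=\hat a_j-\underline a_j$, $\overline a_j(0)=\hat a_j+\overline a_j$. $\Gamma>0$, $\pi_{\tilde\delta}:[0,\infty)\to[0,1]$ continuous with $\pi_{\tilde\delta}(0)=1$, strictly decreasing on $[0,\Gamma]$, zero on $[\Gamma,\infty)$; $[0,\overline\delta(\lambda)]=\{t\ge0:\pi_{\tilde\delta}(t)\ge\lambda\}$ for $\lambda\in(0,1]$, $\overline\delta(0)=\Gamma$. $\pmb{B}$ is a real $n\times n$ matrix, $\pi(\pmb{a})=\min\{\pi_{\tilde a_1}(a_1),\dots,\pi_{\tilde a_n}(a_n),\pi_{\tilde\delta}(\|\pmb{B}(\pmb{a}-\hat{\pmb{a}})\|_2)\}$. $\mathcal{C}(\lambda)=\{\pmb{a}:a_j\in[\underline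 a_j(\lambda),\overline a_j(\lambda)]\ \forall j,\ \|\pmb{B}(\pmb{a}-\hat{\pmb{a}})\|_2\le\overline\delta(\lambda)\}$ for $\lambda\in[0,1]$, and $\mathcal{P}^{\ell}(\pi)=\{\mathrm{P}\text{ Borel probability measure on }\mathbb{R}^n:\ \mathrm{P}(\mathcal{C}(\lambda_i))\ge1-\lambda_i\ \forall i\in\Lambda\}$. *)

theory Defs
  imports "HOL-Probability.Probability"
begin

definition marg_poss :: "(real \<Rightarrow> real) \<Rightarrow> real \<Rightarrow> real \<Rightarrow> real \<Rightarrow> bool" where
  "marg_poss p ah lo hi \<longleftrightarrow>
     lo > 0 \<and> hi > 0 \<and> continuous_on UNIV p \<and> (\<forall>t. 0 \<le> p t \<and> p t \<le> 1) \<and>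
     p ah = 1 \<and> (\<forall>t. t \<notin> {ah - lo <..< ah + hi} \<longrightarrow> p t = 0) \<and>
     strict_mono_on {ah - lo .. ah} p \<and>
     (\<forall>s\<in>{ah .. ah + hi}. \<forall>t\<in>{ah .. ah + hi}. s < t \<longrightarrow> p t < p s)"

definition dev_poss :: "(real \<Rightarrow> real) \<Rightarrow> real \<Rightarrow> bool" where
  "dev_poss p G \<longleftrightarrow>
     G > 0 \<and> continuous_on {0..} p \<and> (\<forall>t\<ge>0. 0 \<le> p t \<and> p t \<le> 1) \<and> p 0 = 1 \<and>
     (\<forall>s\<in>{0..G}. \<forall>t\<in>{0..G}. s < t \<longrightarrow> p t < p s) \<and> (\<forall>t\<ge>G. p t = 0)"

definition cut_lo :: "(real \<Rightarrow> real) \<Rightarrow> real \<Rightarrow> real \<Rightarrow> real \<Rightarrow> real" where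
  "cut_lo p ah lo lam = (if lam = 0 then ah - lo else Inf {t. p t \<ge> lam})"

definition cut_hi :: "(real \<Rightarrow> real) \<Rightarrow> real \<Rightarrow> real \<Rightarrow> real \<Rightarrow> real" where
  "cut_hi p ah hi lam = (if lam = 0 then ah + hi else Sup {t. p t \<ge> lam})"

definition dev_hi :: "(real \<Rightarrow> real) \<Rightarrow> real \<Rightarrow> real \<Rightarrow> real" where
  "dev_hi p G lam = (if lam = 0 then G else Sup {t. t \<ge> 0 \<and> p t \<ge> lam})"

definition Cset ::
  "('n::finite \<Rightarrow> real \<Rightarrow> real) \<Rightarrow> real^'n \<Rightarrow> ('n \<Rightarrow> real) \<Rightarrow> ('n \<Rightarrow> real) \<Rightarrow>
   (real \<Rightarrow> real) \<Rightarrow> real \<Rightarrow> real^'n^'n \<Rightarrow> real \<Rightarrow> (real^'n) set" where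
  "Cset pa ah lo hi pd G B lam =
     {a. (\<forall>j. cut_lo (pa j) (ah $ j) (lo j) lam \<le> a $ j \<and> a $ j \<le> cut_hi (pa j) (ah $ j) (hi j) lam)
         \<and> norm (B *v (a - ah)) \<le> dev_hi pd G lam}"

definition amb_set :: "nat \<Rightarrow> (real \<Rightarrow> (real^'n::finite) set) \<Rightarrow> (real^'n) measure set" where
  "amb_set l C = {P. sets P = sets borel \<and> prob_space P \<and>
      (\<forall>i\<in>{0..l}. measure P (C (real i / real l)) \<ge> 1 - real i / real l)}"

definition worst_exp :: "(real^'n) measure set \<Rightarrow> real^'n \<Rightarrow> real" where
  "worst_exp PS x = Sup ((\<lambda>P. integral\<^sup>L P (\<lambda>a. a \<bullet> x)) ` PS)"

text \<open>Second-order cone programs in variables x (real^'n) and auxiliary y_0..y_{N-1}.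
  An affine form is (coefficients on x, coefficients on y, constant).
  A SOC constraint (us, t) reads  sqrt(sum_{u in us} u(x,y)^2) <= t(x,y);
  with us = [] it is a linear inequality.\<close>
type_synonym 'n aff = "(real^'n) \<times> (nat \<Rightarrow> real) \<times> real"

definition aff_eval :: "nat \<Rightarrow> 'n::finite aff \<Rightarrow> real^'n \<Rightarrow> (nat \<Rightarrow> real) \<Rightarrow> real" where
  "aff_eval N f x y = fst f \<bullet> x + (\<Sum>k<N. fst (snd f) k * y k) + snd (snd f)"

definition soc_holds :: "nat \<Rightarrow> ('n::finite aff list \<times> 'n aff) \<Rightarrow> real^'n \<Rightarrow> (nat \<Rightarrow> real) \<Rightarrow> bool" where
  "soc_holds N c x y \<longleftrightarrow>
     sqrt (\<Sum>u\<leftarrow>fst c. (aff_eval N u x y)\<^sup>2) \<le> aff_eval N (snd c) x y"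

end

theory Submission
  imports Defs
begin

text \<open>The lambda-cuts C(i/l) of each joint possibility distribution are nested compact sets,
  boxes intersected with ellipsoids around the centre. The worst-case expectation of a x over
  the ambiguity set is the average over i < l of the maximum of a x on C(i/l): the uniform
  distribution on one maximiser per level belongs to the set, and a layer-cake estimate
  bounds every other member. Each maximum is, by Lagrangian duality for the ellipsoid
  constraint (with the centre as Slater point), the minimum over w of
  sum_j max (L_j c_j) (U_j c_j) + (B ah) w + delta |w|, where c = x - B^T w. Epigraph
  variables for the norm and the box terms make the robust constraint a finite system of
  second-order cone constraints, and such systems are closed under finite conjunction, which
  also absorbs the polyhedron.\<close>

lemma marg_poss_superlevel:
  assumes "marg_poss p ah lo hi" "0 < lam" "lam \<le> 1"
  shows "ah \<in> {t. lam \<le> p t}" "{t. lam \<le> p t} \<subseteq> {ah - lo <..< ah + hi}"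
  using assms unfolding marg_poss_def by force+

lemma marg_poss_cut_bounds:
  assumes "marg_poss p ah lo hi" "0 \<le> lam" "lam \<le> 1"
  shows "ah - lo \<le> cut_lo p ah lo lam" "cut_lo p ah lo lam \<le> ah"
    and "ah \<le> cut_hi p ah hi lam" "cut_hi p ah hi lam \<le> ah + hi"
proof -
  have "ah - lo \<le> cut_lo p ah lo lam \<and> cut_lo p ah lo lam \<le> ah \<and>
        ah \<le> cut_hi p ah hi lam \<and> cut_hi p ah hi lam \<le> ah + hi"
  proof (cases "lam = 0")
    case True
    then show ?thesis using assms(1) by (simp add: cut_lo_def cut_hi_def marg_poss_def)
  next
    case False
    then have "0 < lam" using assms(2) by simp
    note S = marg_poss_superlevel[OF assms(1) this assms(3)]
    have "bdd_below {t. lam \<le> p t}" "bdd_above {t. lam \<le> p t}"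
      using S(2) by (meson bdd_below_Ioo bdd_above_Ioo bdd_below_mono bdd_above_mono)+
    with S False show ?thesis
      by (auto simp: cut_lo_def cut_hi_def intro!: cInf_lower cSup_upper cInf_greatest cSup_least)
  qed
  then show "ah - lo \<le> cut_lo p ah lo lam" "cut_lo p ah lo lam \<le> ah"
    and "ah \<le> cut_hi p ah hi lam" "cut_hi p ah hi lam \<le> ah + hi" by auto
qed

lemma marg_poss_cut_mono:
  assumes "marg_poss p ah lo hi" "0 \<le> lam" "lam \<le> mu" "mu \<le> 1"
  shows "cut_lo p ah lo lam \<le> cut_lo p ah lo mu" "cut_hi p ah hi mu \<le> cut_hi p ah hi lam"
proof -
  have "cut_lo p ah lo lam \<le> cut_lo p ah lo mu \<and> cut_hi p ah hi mu \<le> cut_hi p ah hi lam"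
  proof (cases "lam = 0")
    case True
    then show ?thesis
      using marg_poss_cut_bounds[OF assms(1)] assms by (simp add: cut_lo_def cut_hi_def)
  next
    case False
    then have "0 < lam" "0 < mu" using assms by auto
    note Sl = marg_poss_superlevel[OF assms(1) \<open>0 < lam\<close>]
      and Sm = marg_poss_superlevel[OF assms(1) \<open>0 < mu\<close> assms(4)]
    have "bdd_below {t. lam \<le> p t}" "bdd_above {t. lam \<le> p t}"
      using Sl(2) assms
      by (meson bdd_below_Ioo bdd_above_Ioo bdd_below_mono bdd_above_mono order_trans)+
    moreover have "{t. mu \<le> p t} \<subseteq> {t. lam \<le> p t}" using assms(3) by auto
    ultimately show ?thesis using False \<open>0 < mu\<close> Sm(1)
      by (auto simp: cut_lo_def cut_hi_def intro!: cInf_superset_mono cSup_subset_mono)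
  qed
  then show "cut_lo p ah lo lam \<le> cut_lo p ah lo mu" "cut_hi p ah hi mu \<le> cut_hi p ah hi lam"
    by auto
qed

lemma dev_poss_superlevel:
  assumes "dev_poss p G" "0 < lam" "lam \<le> 1"
  shows "0 \<in> {t. 0 \<le> t \<and> lam \<le> p t}" "{t. 0 \<le> t \<and> lam \<le> p t} \<subseteq> {0..G}"
  using assms unfolding dev_poss_def by (auto, smt (verit))

lemma dev_poss_dev_hi_bounds:
  assumes "dev_poss p G" "0 \<le> lam" "lam \<le> 1"
  shows "0 \<le> dev_hi p G lam" "dev_hi p G lam \<le> G"
proof -
  have "0 \<le> dev_hi p G lam \<and> dev_hi p G lam \<le> G"
  proof (cases "lam = 0")
    case True
    then show ?thesis using assms(1) by (simp add: dev_hi_def dev_poss_def)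
  next
    case False
    then have "0 < lam" using assms(2) by simp
    note S = dev_poss_superlevel[OF assms(1) this assms(3)]
    have "bdd_above {t. 0 \<le> t \<and> lam \<le> p t}" using S(2) by (meson bdd_above_Icc bdd_above_mono)
    with S False show ?thesis by (auto simp: dev_hi_def intro!: cSup_upper cSup_least)
  qed
  then show "0 \<le> dev_hi p G lam" "dev_hi p G lam \<le> G" by auto
qed

lemma dev_poss_dev_hi_antimono:
  assumes "dev_poss p G" "0 \<le> lam" "lam \<le> mu" "mu \<le> 1"
  shows "dev_hi p G mu \<le> dev_hi p G lam"
proof (cases "lam = 0")
  case True
  then show ?thesis using dev_poss_dev_hi_bounds[OF assms(1)] assms by (simp add: dev_hi_def)
next
  case False
  then have "0 < lam" "0 < mu" using assms by auto
  have "bdd_above {t. 0 \<le> t \<and> lam \<le> p t}"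
    using dev_poss_superlevel(2)[OF assms(1) \<open>0 < lam\<close>] assms
    by (meson bdd_above_Icc bdd_above_mono order_trans)
  moreover have "{t. 0 \<le> t \<and> mu \<le> p t} \<subseteq> {t. 0 \<le> t \<and> lam \<le> p t}" using assms(3) by auto
  ultimately show ?thesis
    using False \<open>0 < mu\<close> dev_poss_superlevel(1)[OF assms(1) \<open>0 < mu\<close> assms(4)]
    by (auto simp: dev_hi_def intro!: cSup_subset_mono)
qed

lemma dev_poss_dev_hi_pos:
  assumes "dev_poss p G" "0 \<le> lam" "lam < 1"
  shows "0 < dev_hi p G lam"
proof (cases "lam = 0")
  case True
  then show ?thesis using assms(1) by (simp add: dev_hi_def dev_poss_def)
next
  case False
  then have "0 < lam" using assms(2) by simp
  have "continuous_on {0..G} p" "p G = 0" "p 0 = 1" "0 < G"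
    using assms(1) unfolding dev_poss_def by (auto intro: continuous_on_subset)
  then obtain t where t: "0 \<le> t" "t \<le> G" "p t = lam"
    using IVT2'[of p G lam 0] \<open>0 < lam\<close> assms(3) by auto
  with assms(3) \<open>p 0 = 1\<close> have "t \<noteq> 0" by auto
  have "bdd_above {t. 0 \<le> t \<and> lam \<le> p t}"
    using dev_poss_superlevel(2)[OF assms(1) \<open>0 < lam\<close>] assms(3)
    by (meson bdd_above_Icc bdd_above_mono less_imp_le)
  then have "t \<le> dev_hi p G lam" using False t by (simp add: dev_hi_def cSup_upper)
  with t \<open>t \<noteq> 0\<close> show ?thesis by auto
qed

definition box_ellipsoid ::
  "('n::finite \<Rightarrow> real) \<Rightarrow> ('n \<Rightarrow> real) \<Rightarrow> real^'n^'n \<Rightarrow> real^'n \<Rightarrow> real \<Rightarrow> (real^'n) set" where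
  "box_ellipsoid L U B ah d = {a. (\<forall>j. L j \<le> a $ j \<and> a $ j \<le> U j) \<and> norm (B *v (a - ah)) \<le> d}"

lemma Cset_eq_box_ellipsoid:
  "Cset pa ah lo hi pd G B lam =
     box_ellipsoid (\<lambda>j. cut_lo (pa j) (ah $ j) (lo j) lam) (\<lambda>j. cut_hi (pa j) (ah $ j) (hi j) lam)
       B ah (dev_hi pd G lam)"
  by (simp add: Cset_def box_ellipsoid_def)

lemma compact_box_ellipsoid: "compact (box_ellipsoid L U B ah d)"
proof -
  have "box_ellipsoid L U B ah d = cbox (\<chi> j. L j) (\<chi> j. U j) \<inter> {a. norm (B *v (a - ah)) \<le> d}"
    by (auto simp: box_ellipsoid_def mem_box_cart)
  moreover have "closed {a. norm (B *v (a - ah)) \<le> d}"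
    by (intro closed_Collect_le continuous_intros
        bounded_linear.continuous_on[OF matrix_vector_mul_bounded_linear])
  ultimately show ?thesis by (simp add: compact_Int_closed)
qed

lemma box_ellipsoid_antimono:
  assumes "\<And>j. L j \<le> L' j" "\<And>j. U' j \<le> U j" "d' \<le> d"
  shows "box_ellipsoid L' U' B ah d' \<subseteq> box_ellipsoid L U B ah d"
  using assms unfolding box_ellipsoid_def by (auto intro: order_trans)

lemma Cset_antimono:
  assumes "\<And>j. marg_poss (pa j) (ah $ j) (lo j) (hi j)" "dev_poss pd G"
    and "0 \<le> lam" "lam \<le> mu" "mu \<le> 1"
  shows "Cset pa ah lo hi pd G B mu \<subseteq> Cset pa ah lo hi pd G B lam"
  unfolding Cset_eq_box_ellipsoid
  using marg_poss_cut_mono[OF assms(1) assms(3-5)] dev_poss_dev_hi_antimono[OF assms(2-5)]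
  by (intro box_ellipsoid_antimono) auto

lemma centre_in_Cset:
  assumes "\<And>j. marg_poss (pa j) (ah $ j) (lo j) (hi j)" "dev_poss pd G"
    and "0 \<le> lam" "lam \<le> 1"
  shows "ah \<in> Cset pa ah lo hi pd G B lam"
  using marg_poss_cut_bounds[OF assms(1) assms(3,4)] dev_poss_dev_hi_bounds[OF assms(2-4)]
  by (simp add: Cset_def)

lemma staircase_bound:
  fixes f :: "'a \<Rightarrow> real" and M :: "nat \<Rightarrow> real" and C :: "nat \<Rightarrow> 'a set"
  assumes nest: "\<And>i j. i \<le> j \<Longrightarrow> j \<le> n \<Longrightarrow> C j \<subseteq> C i"
    and bound: "\<And>i v. i \<le> n \<Longrightarrow> v \<in> C i \<Longrightarrow> f v \<le> M i"
    and v: "v \<in> C 0"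
  shows "f v \<le> M 0 + (\<Sum>i<n. (M (Suc i) - M i) * indicator (C (Suc i)) v)"
proof -
  define k where "k = Max {i. i \<le> n \<and> v \<in> C i}"
  have fin: "finite {i. i \<le> n \<and> v \<in> C i}" by simp
  have "k \<in> {i. i \<le> n \<and> v \<in> C i}" unfolding k_def using v by (intro Max_in fin) auto
  then have k: "k \<le> n" "v \<in> C k" by auto
  have "indicator (C (Suc i)) v = (if i < k then 1 else 0 :: real)" if "i < n" for i
  proof (cases "i < k")
    case True
    with nest[of "Suc i" k] k show ?thesis by auto
  next
    case False
    have "v \<notin> C (Suc i)"
    proof
      assume "v \<in> C (Suc i)"
      then have "Suc i \<le> k" unfolding k_def using that by (intro Max_ge fin) auto
      with False show False by simp
    qed
    with False show ?thesis by simp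
  qed
  then have "(\<Sum>i<n. (M (Suc i) - M i) * indicator (C (Suc i)) v)
      = (\<Sum>i<n. if i \<in> {..<k} then M (Suc i) - M i else 0)"
    by (intro sum.cong) auto
  also have "\<dots> = (\<Sum>i<k. M (Suc i) - M i)"
    using k(1) by (intro sum.mono_neutral_cong_right) auto
  also have "\<dots> = M k - M 0" by (rule sum_lessThan_telescope)
  finally show ?thesis using bound[OF k] by simp
qed

lemma staircase_weights_average:
  fixes M :: "nat \<Rightarrow> real"
  shows "M 0 + (\<Sum>i<n. (M (Suc i) - M i) * (1 - real (Suc i) / real (Suc n)))
           = (\<Sum>i<Suc n. M i) / real (Suc n)"
proof -
  have telescope: "L * M 0 + (\<Sum>i<k. (M (Suc i) - M i) * (L - real (Suc i)))
                     = (\<Sum>i<Suc k. M i) + (L - real (Suc k)) * M k" for L k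
    by (induction k) (simp_all add: algebra_simps)
  have "(\<Sum>i<n. (M (Suc i) - M i) * (1 - real (Suc i) / real (Suc n)))
          = (\<Sum>i<n. (M (Suc i) - M i) * (real (Suc n) - real (Suc i))) / real (Suc n)"
    by (simp add: sum_divide_distrib field_simps del: of_nat_Suc)
  with telescope[of "real (Suc n)" n] show ?thesis
    by (simp add: field_simps del: of_nat_Suc)
qed

lemma uniform_distr_in_amb_set:
  fixes C :: "real \<Rightarrow> (real^'n::finite) set" and a :: "nat \<Rightarrow> real^'n" and l :: nat
  defines "Q \<equiv> distr (measure_pmf (pmf_of_set {..<l})) borel a"
  assumes l: "l \<ge> 1"
    and nest: "\<And>i j. i \<le> j \<Longrightarrow> j \<le> l \<Longrightarrow> C (real j / real l) \<subseteq> C (real i / real l)"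
    and mem: "\<And>i. i < l \<Longrightarrow> a i \<in> C (real i / real l)"
    and meas: "\<And>i. i \<le> l \<Longrightarrow> C (real i / real l) \<in> sets borel"
  shows "Q \<in> amb_set l C" "integral\<^sup>L Q (\<lambda>v. v \<bullet> x) = (\<Sum>i<l. a i \<bullet> x) / real l"
proof -
  define U where "U = measure_pmf (pmf_of_set {..<l})"
  have ne: "{..<l} \<noteq> {}" using l by (auto simp: lessThan_empty_iff)
  have a_meas: "a \<in> measurable U borel" by (simp add: U_def)
  have "1 - real i / real l \<le> measure Q (C (real i / real l))" if i: "i \<le> l" for i
  proof -
    have "{i..<l} \<subseteq> {..<l} \<inter> a -` C (real i / real l)"
      using mem nest by fastforce
    then have "card {i..<l} \<le> card ({..<l} \<inter> a -` C (real i / real l))"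
      by (intro card_mono) auto
    then have "real (card {i..<l}) / real l
        \<le> real (card ({..<l} \<inter> a -` C (real i / real l))) / real l"
      by (intro divide_right_mono) auto
    also have "\<dots> = measure Q (C (real i / real l))"
      using meas[OF i] a_meas ne by (simp add: Q_def U_def measure_distr measure_pmf_of_set)
    finally show ?thesis using i l by (simp add: of_nat_diff field_simps)
  qed
  moreover have "prob_space Q"
    using a_meas by (simp add: Q_def U_def measure_pmf.prob_space_distr)
  ultimately show "Q \<in> amb_set l C" by (simp add: amb_set_def Q_def)
  have "integral\<^sup>L Q (\<lambda>v. v \<bullet> x) = integral\<^sup>L U (\<lambda>i. a i \<bullet> x)"
    using a_meas unfolding Q_def U_def by (intro integral_distr) auto
  also have "\<dots> = (\<Sum>i<l. a i \<bullet> x) / real l"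
    unfolding U_def using ne by (simp add: integral_pmf_of_set)
  finally show "integral\<^sup>L Q (\<lambda>v. v \<bullet> x) = (\<Sum>i<l. a i \<bullet> x) / real l" .
qed

lemma amb_set_AE_in_outer_cut:
  fixes C :: "real \<Rightarrow> (real^'n::finite) set"
  assumes P: "P \<in> amb_set l C" and meas: "C 0 \<in> sets borel"
  shows "AE v in P. v \<in> C 0"
proof -
  interpret prob_space P using P by (simp add: amb_set_def)
  have "C 0 \<in> events" using P meas by (simp add: amb_set_def)
  moreover have "prob (C 0) = 1"
    using P prob_le_1 by (intro antisym) (auto simp: amb_set_def dest: bspec[of _ _ 0])
  ultimately show ?thesis by (simp add: AE_in_set_eq_1)
qed

lemma amb_set_integrable_inner:
  fixes C :: "real \<Rightarrow> (real^'n::finite) set"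
  assumes P: "P \<in> amb_set l C" and meas: "C 0 \<in> sets borel" and bdd: "bounded (C 0)"
  shows "integrable P (\<lambda>v. v \<bullet> x)"
proof -
  interpret prob_space P using P by (simp add: amb_set_def)
  obtain R where R: "\<And>v. v \<in> C 0 \<Longrightarrow> norm v \<le> R" using bdd unfolding bounded_iff by auto
  have "AE v in P. norm (v \<bullet> x) \<le> R * norm x"
    using amb_set_AE_in_outer_cut[OF P meas] by eventually_elim
      (metis R Cauchy_Schwarz_ineq2 mult_right_mono norm_ge_zero order_trans real_norm_def)
  moreover have "(\<lambda>v. v \<bullet> x) \<in> borel_measurable P"
    using P by (simp add: amb_set_def cong: measurable_cong_sets)
  ultimately show ?thesis by (rule integrable_const_bound)
qed

lemma (in prob_space) integral_step_function:
  fixes c :: real and a :: "nat \<Rightarrow> real"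
  assumes "\<And>i. i < n \<Longrightarrow> S i \<in> events"
  shows "integrable M (\<lambda>v. c + (\<Sum>i<n. a i * indicator (S i) v))"
    and "integral\<^sup>L M (\<lambda>v. c + (\<Sum>i<n. a i * indicator (S i) v)) = c + (\<Sum>i<n. a i * prob (S i))"
proof -
  have step: "integrable M (\<lambda>v. a i * indicator (S i) v)" if "i \<in> {..<n}" for i
    using assms[of i] that
    by (intro integrable_mult_right integrable_real_indicator) (auto simp: less_top[symmetric])
  have sum: "integrable M (\<lambda>v. \<Sum>i<n. a i * indicator (S i) v)"
    by (rule Bochner_Integration.integrable_sum) (rule step)
  show "integrable M (\<lambda>v. c + (\<Sum>i<n. a i * indicator (S i) v))"
    by (rule Bochner_Integration.integrable_add[OF integrable_const sum])
  have "integral\<^sup>L M (\<lambda>v. c + (\<Sum>i<n. a i * indicator (S i) v))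
      = c + (\<Sum>i<n. integral\<^sup>L M (\<lambda>v. a i * indicator (S i) v))"
    by (simp only: Bochner_Integration.integral_add[OF integrable_const sum]
        Bochner_Integration.integral_sum[OF step]) (simp add: prob_space)
  also have "\<dots> = c + (\<Sum>i<n. a i * prob (S i))"
    using assms
    by (intro arg_cong2[where f = "(+)"] sum.cong) (auto simp: Int_absorb2 sets.sets_into_space)
  finally show "integral\<^sup>L M (\<lambda>v. c + (\<Sum>i<n. a i * indicator (S i) v))
      = c + (\<Sum>i<n. a i * prob (S i))" .
qed

text \<open>Layer-cake argument: almost surely a x lies below the staircase built from the maxima
  M i on the nested cuts, and the mass bounds of the ambiguity set control its integral.\<close>
lemma amb_set_integral_le_average:
  fixes C :: "real \<Rightarrow> (real^'n::finite) set" and M :: "nat \<Rightarrow> real" and l :: nat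
  assumes l: "l \<ge> 1"
    and nest: "\<And>i j. i \<le> j \<Longrightarrow> j \<le> l \<Longrightarrow> C (real j / real l) \<subseteq> C (real i / real l)"
    and meas: "\<And>i. i \<le> l \<Longrightarrow> C (real i / real l) \<in> sets borel"
    and bdd: "bounded (C 0)"
    and bound: "\<And>i v. i < l \<Longrightarrow> v \<in> C (real i / real l) \<Longrightarrow> v \<bullet> x \<le> M i"
    and antitone: "\<And>i. Suc i < l \<Longrightarrow> M (Suc i) \<le> M i"
    and P: "P \<in> amb_set l C"
  shows "integral\<^sup>L P (\<lambda>v. v \<bullet> x) \<le> (\<Sum>i<l. M i) / real l"
proof -
  obtain n where n: "l = Suc n" using l by (cases l) auto
  define K where "K i = C (real i / real l)" for i
  interpret prob_space P using P by (simp add: amb_set_def)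
  have meas0: "C 0 \<in> sets borel" using meas[of 0] by simp
  have K_events: "K (Suc i) \<in> events" if "i < n" for i
    using meas[of "Suc i"] P that n by (simp add: K_def amb_set_def)
  have K_prob: "1 - real (Suc i) / real l \<le> prob (K (Suc i))" if "i < n" for i
    using P that n by (auto simp: amb_set_def K_def simp del: of_nat_Suc)
  define g where "g v = M 0 + (\<Sum>i<n. (M (Suc i) - M i) * indicator (K (Suc i)) v)" for v
  have K_nest: "K j \<subseteq> K i" if "i \<le> j" "j \<le> n" for i j
    using nest[of i j] that n by (simp add: K_def)
  have K_bound: "v \<bullet> x \<le> M i" if "i \<le> n" "v \<in> K i" for i v
    using bound[of i v] that n by (simp add: K_def)
  have "AE v in P. v \<in> K 0" using amb_set_AE_in_outer_cut[OF P meas0] by (simp add: K_def)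
  then have "AE v in P. v \<bullet> x \<le> g v"
    unfolding g_def by eventually_elim (rule staircase_bound[OF K_nest K_bound])
  then have "integral\<^sup>L P (\<lambda>v. v \<bullet> x) \<le> integral\<^sup>L P g"
    using amb_set_integrable_inner[OF P meas0 bdd] integral_step_function(1)[OF K_events]
    unfolding g_def by (intro integral_mono_AE) auto
  also have "\<dots> = M 0 + (\<Sum>i<n. (M (Suc i) - M i) * prob (K (Suc i)))"
    unfolding g_def by (rule integral_step_function(2)[OF K_events])
  also have "\<dots> \<le> M 0 + (\<Sum>i<n. (M (Suc i) - M i) * (1 - real (Suc i) / real l))"
    using K_prob n antitone by (intro add_left_mono sum_mono mult_left_mono_neg) auto
  also have "\<dots> = (\<Sum>i<l. M i) / real l"
    unfolding n by (rule staircase_weights_average)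
  finally show ?thesis .
qed

lemma worst_exp_eq_average_max:
  fixes C :: "real \<Rightarrow> (real^'n::finite) set" and a :: "nat \<Rightarrow> real^'n" and l :: nat
  assumes l: "l \<ge> 1"
    and nest: "\<And>i j. i \<le> j \<Longrightarrow> j \<le> l \<Longrightarrow> C (real j / real l) \<subseteq> C (real i / real l)"
    and meas: "\<And>i. i \<le> l \<Longrightarrow> C (real i / real l) \<in> sets borel"
    and bdd: "bounded (C 0)"
    and mem: "\<And>i. i < l \<Longrightarrow> a i \<in> C (real i / real l)"
    and max: "\<And>i v. i < l \<Longrightarrow> v \<in> C (real i / real l) \<Longrightarrow> v \<bullet> x \<le> a i \<bullet> x"
  shows "worst_exp (amb_set l C) x = (\<Sum>i<l. a i \<bullet> x) / real l"
  unfolding worst_exp_def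
proof (rule cSup_eq_maximum)
  show "(\<Sum>i<l. a i \<bullet> x) / real l \<in> (\<lambda>P. integral\<^sup>L P (\<lambda>v. v \<bullet> x)) ` amb_set l C"
    using uniform_distr_in_amb_set[of l C a, OF l nest mem meas] by (metis image_eqI)
next
  have antitone: "a (Suc i) \<bullet> x \<le> a i \<bullet> x" if "Suc i < l" for i
    using max[OF _ subsetD[OF nest mem]] that by auto
  fix y assume "y \<in> (\<lambda>P. integral\<^sup>L P (\<lambda>v. v \<bullet> x)) ` amb_set l C"
  then show "y \<le> (\<Sum>i<l. a i \<bullet> x) / real l"
    using amb_set_integral_le_average[where M = "\<lambda>i. a i \<bullet> x", OF l nest meas bdd max antitone]
    by blast
qed

lemma halfspace_below_cball_times_ray:
  fixes w :: "'a::real_inner"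
  assumes d: "0 \<le> d" and below: "\<And>z t. norm z \<le> d \<Longrightarrow> s < t \<Longrightarrow> \<beta> \<le> w \<bullet> z + \<mu> * t"
  shows "0 \<le> \<mu>" "\<beta> \<le> \<mu> * s - d * norm w"
proof -
  show "0 \<le> \<mu>"
  proof (rule ccontr)
    assume "\<not> 0 \<le> \<mu>"
    define t where "t = max (s + 1) (\<beta> / \<mu> + 1)"
    have "\<mu> * t \<le> \<mu> * (\<beta> / \<mu> + 1)" using \<open>\<not> 0 \<le> \<mu>\<close> by (intro mult_left_mono_neg) (auto simp: t_def)
    also have "\<dots> = \<beta> + \<mu>" using \<open>\<not> 0 \<le> \<mu>\<close> by (simp add: distrib_left)
    finally have "\<mu> * t \<le> \<beta> + \<mu>" .
    moreover have "\<beta> \<le> \<mu> * t" using below[of 0 t] d by (simp add: t_def)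
    ultimately show False using \<open>\<not> 0 \<le> \<mu>\<close> by linarith
  qed
  define z where "z = - (d / norm w) *\<^sub>R w"
  have "norm z \<le> d" "w \<bullet> z = - d * norm w"
    using d by (auto simp: z_def power2_norm_eq_inner[symmetric] power2_eq_square)
  then have ray: "\<beta> + d * norm w \<le> \<mu> * t" if "s < t" for t
    using below[of z t] that by simp
  show "\<beta> \<le> \<mu> * s - d * norm w"
  proof (cases "\<mu> = 0")
    case True
    then show ?thesis using ray[of "s + 1"] by simp
  next
    case False
    with \<open>0 \<le> \<mu>\<close> have "0 < \<mu>" by simp
    have "\<beta> + d * norm w \<le> \<mu> * s"
    proof (rule dense_ge)
      fix u assume "\<mu> * s < u"
      then have "s < u / \<mu>" using \<open>0 < \<mu>\<close> by (simp add: field_simps)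
      then show "\<beta> + d * norm w \<le> u" using ray[of "u / \<mu>"] \<open>0 < \<mu>\<close> by simp
    qed
    then show ?thesis by simp
  qed
qed

text \<open>Separate the image of K under a \<mapsto> (A a, a x) from the cylinder over the ball above
  level s. Since 0 lies in K and A 0 is interior to the ball, the normal of the hyperplane has a
  positive last component, and normalising it gives the multiplier.\<close>
lemma convex_norm_ball_multiplier:
  fixes K :: "'a::euclidean_space set" and A :: "'a \<Rightarrow> 'b::euclidean_space"
  assumes K: "convex K" "0 \<in> K" and A: "linear A" and d: "0 < d"
    and bound: "\<And>a. a \<in> K \<Longrightarrow> norm (A a) \<le> d \<Longrightarrow> a \<bullet> x \<le> s"
  shows "\<exists>w. \<forall>a\<in>K. a \<bullet> x - w \<bullet> A a + d * norm w \<le> s"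
proof -
  define S where "S = (\<lambda>a. (A a, a \<bullet> x)) ` K"
  define T where "T = cball (0::'b) d \<times> {s<..}"
  have "linear (\<lambda>a. (A a, a \<bullet> x))"
    using A by (intro linearI) (auto simp: linear_add linear_scale inner_add_left)
  then have "convex S" unfolding S_def using K(1) by (rule convex_linear_image)
  moreover have "convex T" unfolding T_def by (intro convex_Times convex_cball convex_real_interval)
  moreover have "S \<noteq> {}" "T \<noteq> {}" using K(2) d by (auto simp: S_def T_def intro!: exI[of _ "s + 1"])
  moreover have "S \<inter> T = {}" using bound by (force simp: S_def T_def)
  ultimately obtain W \<beta> where W: "W \<noteq> 0" "\<forall>p\<in>S. W \<bullet> p \<le> \<beta>" "\<forall>p\<in>T. \<beta> \<le> W \<bullet> p"
    using separating_hyperplane_sets by metis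
  obtain v \<mu> where W_eq: "W = (v, \<mu>)" by (cases W)
  have S_side: "v \<bullet> A a + \<mu> * (a \<bullet> x) \<le> \<beta>" if "a \<in> K" for a
    using W(2) that W_eq by (auto simp: S_def)
  have T_side: "\<beta> \<le> v \<bullet> z + \<mu> * t" if "norm z \<le> d" "s < t" for z t
    using W(3) that W_eq by (auto simp: T_def)
  note ray = halfspace_below_cball_times_ray[of d s \<beta> v \<mu>, OF less_imp_le[OF d] T_side]
  have "0 < \<mu>"
  proof (rule ccontr)
    assume "\<not> 0 < \<mu>"
    with ray(1) have "\<mu> = 0" by simp
    with S_side[OF K(2)] ray(2) A have "d * norm v \<le> 0" by (simp add: linear_0)
    with d have "v = 0" by (simp add: mult_le_0_iff)
    with \<open>\<mu> = 0\<close> W(1) W_eq show False by (simp add: zero_prod_def)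
  qed
  show ?thesis
  proof (intro exI ballI)
    fix a assume "a \<in> K"
    have "v \<bullet> A a + \<mu> * (a \<bullet> x) + d * norm v \<le> \<mu> * s"
      using S_side[OF \<open>a \<in> K\<close>] ray(2) by linarith
    then have "(v \<bullet> A a + \<mu> * (a \<bullet> x) + d * norm v) / \<mu> \<le> s"
      using \<open>0 < \<mu>\<close> by (simp add: divide_le_eq mult.commute)
    then show "a \<bullet> x - (- (1 / \<mu>) *\<^sub>R v) \<bullet> A a + d * norm (- (1 / \<mu>) *\<^sub>R v) \<le> s"
      using \<open>0 < \<mu>\<close> by (simp add: add_divide_distrib)
  qed
qed

definition box_ellipsoid_dual ::
  "('n::finite \<Rightarrow> real) \<Rightarrow> ('n \<Rightarrow> real) \<Rightarrow> real^'n^'n \<Rightarrow> real^'n \<Rightarrow> real \<Rightarrow> real^'n \<Rightarrow> real^'n \<Rightarrow> real"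
  where
  "box_ellipsoid_dual L U B ah d x w =
     (\<Sum>j\<in>UNIV. max (L j * (x - w v* B) $ j) (U j * (x - w v* B) $ j)) + (B *v ah) \<bullet> w + d * norm w"

lemma inner_vector_matrix: "(a::real^'n::finite) \<bullet> (w v* B) = w \<bullet> (B *v a)"
  by (metis dot_lmul_matrix inner_commute)

lemma inner_le_box_max:
  fixes a c :: "real^'n::finite"
  assumes "\<And>j. L j \<le> a $ j \<and> a $ j \<le> U j"
  shows "a \<bullet> c \<le> (\<Sum>j\<in>UNIV. max (L j * c $ j) (U j * c $ j))"
  unfolding inner_vec_def
proof (rule sum_mono)
  fix j
  show "a $ j \<bullet> c $ j \<le> max (L j * c $ j) (U j * c $ j)"
    using assms[of j]
    by (cases "0 \<le> c $ j") (auto simp: max_def intro: mult_right_mono mult_right_mono_neg)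
qed

lemma inner_box_vertex:
  fixes c :: "real^'n::finite"
  assumes "\<And>j. L j \<le> U j"
  shows "(\<chi> j. if 0 \<le> c $ j then U j else L j) \<bullet> c = (\<Sum>j\<in>UNIV. max (L j * c $ j) (U j * c $ j))"
  unfolding inner_vec_def
proof (rule sum.cong)
  fix j
  show "(\<chi> j. if 0 \<le> c $ j then U j else L j) $ j \<bullet> c $ j = max (L j * c $ j) (U j * c $ j)"
    using assms[of j]
    by (cases "0 \<le> c $ j") (auto simp: max_def intro: mult_right_mono mult_right_mono_neg)
qed simp

lemma box_ellipsoid_dual_bound:
  assumes "a \<in> box_ellipsoid L U B ah d"
  shows "a \<bullet> x \<le> box_ellipsoid_dual L U B ah d x w"
proof -
  have "a \<bullet> x = a \<bullet> (x - w v* B) + w \<bullet> (B *v ah) + w \<bullet> (B *v (a - ah))"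
    by (simp add: inner_diff_right matrix_vector_mult_diff_distrib inner_vector_matrix)
  also have "a \<bullet> (x - w v* B) \<le> (\<Sum>j\<in>UNIV. max (L j * (x - w v* B) $ j) (U j * (x - w v* B) $ j))"
    using assms by (intro inner_le_box_max) (simp add: box_ellipsoid_def)
  also have "w \<bullet> (B *v (a - ah)) \<le> norm w * d"
    using assms norm_cauchy_schwarz[of w] by (simp add: box_ellipsoid_def)
      (meson mult_left_mono norm_ge_zero order_trans)
  finally show ?thesis by (simp add: box_ellipsoid_dual_def inner_commute[of w] mult.commute)
qed

lemma box_ellipsoid_strong_duality:
  assumes centre: "\<And>j. L j \<le> ah $ j \<and> ah $ j \<le> U j" and d: "0 < d"
    and sup_le: "\<forall>a\<in>box_ellipsoid L U B ah d. a \<bullet> x \<le> s"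
  shows "\<exists>w. box_ellipsoid_dual L U B ah d x w \<le> s"
proof -
  define box where "box = cbox (\<chi> j. L j) (\<chi> j. U j)"
  define K where "K = (\<lambda>a. a - ah) ` box"
  have in_box: "a \<in> box \<longleftrightarrow> (\<forall>j. L j \<le> a $ j \<and> a $ j \<le> U j)" for a
    by (simp add: box_def mem_box_cart)
  have "convex K"
    unfolding K_def box_def by (intro convex_translation_subtract convex_box)
  moreover have "ah \<in> box" using centre in_box by blast
  then have "0 \<in> K" unfolding K_def by (rule image_eqI[rotated]) simp
  moreover have "a \<bullet> x \<le> s - ah \<bullet> x" if "a \<in> K" "norm (B *v a) \<le> d" for a
  proof -
    from \<open>a \<in> K\<close> obtain b where b: "b \<in> box" "a = b - ah" unfolding K_def by blast
    then have "b \<in> box_ellipsoid L U B ah d"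
      using that(2) in_box unfolding box_ellipsoid_def by blast
    with sup_le have "b \<bullet> x \<le> s" by blast
    with b(2) show ?thesis by (simp add: inner_diff_left)
  qed
  ultimately obtain w where w: "\<forall>a\<in>K. a \<bullet> x - w \<bullet> (B *v a) + d * norm w \<le> s - ah \<bullet> x"
    using convex_norm_ball_multiplier[OF _ _ matrix_vector_mul_linear d] by blast
  have LU: "\<And>j. L j \<le> U j" using centre by (meson order_trans)
  define a where "a = (\<chi> j. if 0 \<le> (x - w v* B) $ j then U j else L j)"
  have a_max: "a \<bullet> (x - w v* B) = (\<Sum>j\<in>UNIV. max (L j * (x - w v* B) $ j) (U j * (x - w v* B) $ j))"
    unfolding a_def using LU by (rule inner_box_vertex)
  have "a \<in> box" using LU by (simp add: in_box a_def)
  then have "a - ah \<in> K" unfolding K_def by (rule imageI)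
  with w have "(a - ah) \<bullet> x - w \<bullet> (B *v (a - ah)) + d * norm w \<le> s - ah \<bullet> x" by (rule bspec)
  moreover have "box_ellipsoid_dual L U B ah d x w
      = (a - ah) \<bullet> x - w \<bullet> (B *v (a - ah)) + d * norm w + ah \<bullet> x"
    unfolding box_ellipsoid_dual_def a_max[symmetric]
    by (simp add: inner_diff_left inner_diff_right matrix_vector_mult_diff_distrib
        inner_vector_matrix inner_commute[of "B *v ah" w])
  ultimately have "box_ellipsoid_dual L U B ah d x w \<le> s" by linarith
  then show ?thesis ..
qed

lemma box_ellipsoid_support_le_iff:
  assumes "\<And>j. L j \<le> ah $ j \<and> ah $ j \<le> U j" "0 < d"
  shows "(\<forall>a\<in>box_ellipsoid L U B ah d. a \<bullet> x \<le> s) \<longleftrightarrow> (\<exists>w. box_ellipsoid_dual L U B ah d x w \<le> s)"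
  using box_ellipsoid_strong_duality[OF assms] box_ellipsoid_dual_bound order_trans by blast

lemma sum_le_iff_exists_dual:
  fixes m :: "'i \<Rightarrow> real" and D :: "'i \<Rightarrow> 'w \<Rightarrow> real"
  assumes "finite I" and dual: "\<And>i s. i \<in> I \<Longrightarrow> m i \<le> s \<longleftrightarrow> (\<exists>w. D i w \<le> s)"
  shows "(\<Sum>i\<in>I. m i) \<le> S \<longleftrightarrow> (\<exists>w. (\<Sum>i\<in>I. D i (w i)) \<le> S)"
proof
  assume le: "(\<Sum>i\<in>I. m i) \<le> S"
  have "\<forall>i\<in>I. \<exists>w. D i w \<le> m i" using dual by blast
  then obtain w where "\<And>i. i \<in> I \<Longrightarrow> D i (w i) \<le> m i" by metis
  then have "(\<Sum>i\<in>I. D i (w i)) \<le> (\<Sum>i\<in>I. m i)" by (rule sum_mono)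
  with le show "\<exists>w. (\<Sum>i\<in>I. D i (w i)) \<le> S" by (blast intro: order_trans)
next
  assume "\<exists>w. (\<Sum>i\<in>I. D i (w i)) \<le> S"
  then obtain w where le: "(\<Sum>i\<in>I. D i (w i)) \<le> S" ..
  have "(\<Sum>i\<in>I. m i) \<le> (\<Sum>i\<in>I. D i (w i))" using dual by (intro sum_mono) blast
  with le show "(\<Sum>i\<in>I. m i) \<le> S" by linarith
qed

lemma Cset_worst_exp_eq_average_max:
  fixes ah :: "real^'n::finite" and B :: "real^'n^'n" and pa :: "'n \<Rightarrow> real \<Rightarrow> real"
    and lo hi :: "'n \<Rightarrow> real" and pd :: "real \<Rightarrow> real" and G :: real and l :: nat
  defines "C \<equiv> Cset pa ah lo hi pd G B"
  assumes l: "l \<ge> 1"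
    and marg: "\<And>j. marg_poss (pa j) (ah $ j) (lo j) (hi j)" and dev: "dev_poss pd G"
  obtains a where "\<And>i. i < l \<Longrightarrow> a i \<in> C (real i / real l)"
    and "\<And>i v. i < l \<Longrightarrow> v \<in> C (real i / real l) \<Longrightarrow> v \<bullet> x \<le> a i \<bullet> x"
    and "worst_exp (amb_set l C) x = (\<Sum>i<l. a i \<bullet> x) / real l"
proof -
  have level: "0 \<le> real i / real l" "i \<le> l \<Longrightarrow> real i / real l \<le> 1" for i
    using l by auto
  have nest: "C (real j / real l) \<subseteq> C (real i / real l)" if "i \<le> j" "j \<le> l" for i j
    unfolding C_def using that level
    by (intro Cset_antimono[OF marg dev]) (auto intro: divide_right_mono)
  have compact: "compact (C lam)" for lam
    unfolding C_def Cset_eq_box_ellipsoid by (rule compact_box_ellipsoid)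
  have "\<exists>a\<in>C (real i / real l). \<forall>v\<in>C (real i / real l). v \<bullet> x \<le> a \<bullet> x" if "i \<le> l" for i
  proof (rule continuous_attains_sup[OF compact])
    show "C (real i / real l) \<noteq> {}"
      unfolding C_def using centre_in_Cset[OF marg dev level(1) level(2)[OF that]] by blast
  qed (intro continuous_intros)
  then obtain a where mem: "\<And>i. i < l \<Longrightarrow> a i \<in> C (real i / real l)"
    and max: "\<And>i v. i < l \<Longrightarrow> v \<in> C (real i / real l) \<Longrightarrow> v \<bullet> x \<le> a i \<bullet> x"
    by (metis less_imp_le)
  have "C (real i / real l) \<in> sets borel" for i
    using compact by (simp add: borel_closed compact_imp_closed)
  moreover have "bounded (C 0)" using compact[of 0] by (simp add: compact_imp_bounded)
  ultimately have "worst_exp (amb_set l C) x = (\<Sum>i<l. a i \<bullet> x) / real l"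
    by (intro worst_exp_eq_average_max[of l C, OF l nest _ _ mem max])
  with mem max show ?thesis by (rule that)
qed

lemma worst_exp_le_iff_dual:
  fixes ah :: "real^'n::finite" and B :: "real^'n^'n" and pa :: "'n \<Rightarrow> real \<Rightarrow> real"
    and lo hi :: "'n \<Rightarrow> real" and pd :: "real \<Rightarrow> real" and G :: real and l :: nat
  defines "L i j \<equiv> cut_lo (pa j) (ah $ j) (lo j) (real i / real l)"
    and "U i j \<equiv> cut_hi (pa j) (ah $ j) (hi j) (real i / real l)"
    and "d i \<equiv> dev_hi pd G (real i / real l)"
  assumes l: "l \<ge> 1"
    and marg: "\<And>j. marg_poss (pa j) (ah $ j) (lo j) (hi j)" and dev: "dev_poss pd G"
  shows "worst_exp (amb_set l (Cset pa ah lo hi pd G B)) x \<le> b \<longleftrightarrow>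
    (\<exists>w. (\<Sum>i<l. box_ellipsoid_dual (L i) (U i) B ah (d i) x (w i)) \<le> real l * b)"
proof -
  define C where "C = Cset pa ah lo hi pd G B"
  obtain a where mem: "\<And>i. i < l \<Longrightarrow> a i \<in> C (real i / real l)"
    and max: "\<And>i v. i < l \<Longrightarrow> v \<in> C (real i / real l) \<Longrightarrow> v \<bullet> x \<le> a i \<bullet> x"
    and worst: "worst_exp (amb_set l C) x = (\<Sum>i<l. a i \<bullet> x) / real l"
    unfolding C_def using Cset_worst_exp_eq_average_max[OF l marg dev] by metis
  have C_eq: "C (real i / real l) = box_ellipsoid (L i) (U i) B ah (d i)" for i
    by (simp add: C_def Cset_eq_box_ellipsoid L_def[abs_def] U_def[abs_def] d_def)
  have "worst_exp (amb_set l C) x \<le> b \<longleftrightarrow> (\<Sum>i<l. a i \<bullet> x) \<le> real l * b"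
    unfolding worst using l by (simp add: divide_le_eq mult.commute)
  also have "\<dots> \<longleftrightarrow> (\<exists>w. (\<Sum>i<l. box_ellipsoid_dual (L i) (U i) B ah (d i) x (w i)) \<le> real l * b)"
  proof (rule sum_le_iff_exists_dual)
    fix i s assume "i \<in> {..<l}"
    then have i: "i < l" "0 \<le> real i / real l" "real i / real l < 1" using l by auto
    have "a i \<bullet> x \<le> s \<longleftrightarrow> (\<forall>v\<in>C (real i / real l). v \<bullet> x \<le> s)"
      using mem[OF i(1)] max[OF i(1)] by (auto intro: order_trans)
    also have "\<dots> \<longleftrightarrow> (\<exists>w. box_ellipsoid_dual (L i) (U i) B ah (d i) x w \<le> s)"
      unfolding C_eq
    proof (rule box_ellipsoid_support_le_iff)
      show "L i j \<le> ah $ j \<and> ah $ j \<le> U i j" for j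
        using marg_poss_cut_bounds[OF marg i(2)] i by (simp add: L_def U_def)
      show "0 < d i" using dev_poss_dev_hi_pos[OF dev i(2,3)] by (simp add: d_def)
    qed
    finally show "a i \<bullet> x \<le> s \<longleftrightarrow> (\<exists>w. box_ellipsoid_dual (L i) (U i) B ah (d i) x w \<le> s)" .
  qed simp
  finally show ?thesis by (simp add: C_def)
qed

definition soc_representable :: "(real^'n::finite \<Rightarrow> bool) \<Rightarrow> bool" where
  "soc_representable S \<longleftrightarrow> (\<exists>N cs. \<forall>x. S x \<longleftrightarrow> (\<exists>y. \<forall>c\<in>set cs. soc_holds N c x y))"

lemma soc_representable_decode:
  fixes dec :: "(nat \<Rightarrow> real) \<Rightarrow> 'z"
  assumes "finite CS" "surj dec" "\<And>x y. (\<forall>c\<in>CS. soc_holds N c x y) \<longleftrightarrow> P x (dec y)"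
  shows "soc_representable (\<lambda>x. \<exists>z. P x z)"
proof -
  obtain cs where "set cs = CS" using finite_list[OF assms(1)] by blast
  moreover have "(\<exists>z. P x z) \<longleftrightarrow> (\<exists>y. P x (dec y))" for x using assms(2) by (metis surjD)
  ultimately show ?thesis unfolding soc_representable_def using assms(3) by metis
qed

lemma soc_holds_Nil: "soc_holds N ([], f) x y \<longleftrightarrow> 0 \<le> aff_eval N f x y"
  by (simp add: soc_holds_def)

lemma soc_holds_cong:
  assumes "\<And>n. n < N \<Longrightarrow> y n = y' n"
  shows "soc_holds N c x y \<longleftrightarrow> soc_holds N c x y'"
  using assms by (simp add: soc_holds_def aff_eval_def)

lemma soc_representable_halfspace: "soc_representable (\<lambda>x. g \<bullet> x \<le> h)"
proof -
  have "g \<bullet> x \<le> h \<longleftrightarrow> (\<forall>c\<in>set [([], (- g, \<lambda>_. 0, h))]. soc_holds 0 c x y)" for x y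
    by (simp add: soc_holds_Nil aff_eval_def)
  then show ?thesis unfolding soc_representable_def by blast
qed

text \<open>Conjunctions are represented by placing the auxiliary variables of the two systems
  in disjoint index ranges.\<close>
definition aff_shift :: "nat \<Rightarrow> nat \<Rightarrow> 'n::finite aff \<Rightarrow> 'n aff" where
  "aff_shift k N f = (fst f, \<lambda>n. if k \<le> n \<and> n < k + N then fst (snd f) (n - k) else 0, snd (snd f))"

definition soc_shift :: "nat \<Rightarrow> nat \<Rightarrow> 'n::finite aff list \<times> 'n aff \<Rightarrow> 'n aff list \<times> 'n aff" where
  "soc_shift k N c = (map (aff_shift k N) (fst c), aff_shift k N (snd c))"

lemma aff_eval_shift:
  assumes "k + N \<le> M"
  shows "aff_eval M (aff_shift k N f) x y = aff_eval N f x (\<lambda>n. y (k + n))"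
proof -
  have "(\<Sum>n<M. (if k \<le> n \<and> n < k + N then fst (snd f) (n - k) else 0) * y n)
      = (\<Sum>n\<in>{k..<k + N}. fst (snd f) (n - k) * y n)"
    using assms by (intro sum.mono_neutral_cong_right) auto
  also have "\<dots> = (\<Sum>n<N. fst (snd f) n * y (k + n))"
    by (simp add: sum.atLeastLessThan_shift_0[of _ k] lessThan_atLeast0 add.commute)
  finally show ?thesis by (simp add: aff_eval_def aff_shift_def)
qed

lemma soc_holds_shift:
  "k + N \<le> M \<Longrightarrow> soc_holds M (soc_shift k N c) x y \<longleftrightarrow> soc_holds N c x (\<lambda>n. y (k + n))"
  by (simp add: soc_holds_def soc_shift_def aff_eval_shift o_def)

lemma soc_representable_conj:
  assumes "soc_representable S" "soc_representable T"
  shows "soc_representable (\<lambda>x. S x \<and> T x)"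
proof -
  obtain N1 cs1 N2 cs2 where
    S: "\<And>x. S x \<longleftrightarrow> (\<exists>y. \<forall>c\<in>set cs1. soc_holds N1 c x y)" and
    T: "\<And>x. T x \<longleftrightarrow> (\<exists>y. \<forall>c\<in>set cs2. soc_holds N2 c x y)"
    using assms unfolding soc_representable_def by metis
  define cs where "cs = map (soc_shift 0 N1) cs1 @ map (soc_shift N1 N2) cs2"
  have cs: "(\<forall>c\<in>set cs. soc_holds (N1 + N2) c x y) \<longleftrightarrow>
      (\<forall>c\<in>set cs1. soc_holds N1 c x y) \<and> (\<forall>c\<in>set cs2. soc_holds N2 c x (\<lambda>n. y (N1 + n)))" for x y
  proof -
    have shift0: "soc_holds (N1 + N2) (soc_shift 0 N1 c) x y \<longleftrightarrow> soc_holds N1 c x y" for c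
      using soc_holds_shift[of 0 N1 "N1 + N2" c x y] by simp
    have shift1: "soc_holds (N1 + N2) (soc_shift N1 N2 c) x y \<longleftrightarrow>
        soc_holds N2 c x (\<lambda>n. y (N1 + n))" for c
      using soc_holds_shift[of N1 N2 "N1 + N2" c x y] by simp
    show ?thesis unfolding cs_def by (simp add: ball_Un Ball_image_comp o_def shift0 shift1)
  qed
  have "S x \<and> T x \<longleftrightarrow> (\<exists>y. \<forall>c\<in>set cs. soc_holds (N1 + N2) c x y)" for x
  proof
    assume "S x \<and> T x"
    then obtain y1 y2 where "\<forall>c\<in>set cs1. soc_holds N1 c x y1" "\<forall>c\<in>set cs2. soc_holds N2 c x y2"
      using S T by blast
    moreover have "soc_holds N1 c x (\<lambda>n. if n < N1 then y1 n else y2 (n - N1)) \<longleftrightarrow>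
        soc_holds N1 c x y1" for c
      by (rule soc_holds_cong) simp
    ultimately show "\<exists>y. \<forall>c\<in>set cs. soc_holds (N1 + N2) c x y"
      unfolding cs by (intro exI[of _ "\<lambda>n. if n < N1 then y1 n else y2 (n - N1)"]) simp
  qed (use S T cs in blast)
  then show ?thesis unfolding soc_representable_def by blast
qed

lemma soc_representable_all_less:
  fixes n :: nat
  assumes "\<And>i. i < n \<Longrightarrow> soc_representable (S i)"
  shows "soc_representable (\<lambda>x. \<forall>i<n. S i x)"
  using assms
proof (induction n)
  case 0
  have "(\<forall>i<0. S i x) \<longleftrightarrow> (\<exists>y. \<forall>c\<in>set []. soc_holds 0 c x y)" for x by simp
  then show ?case unfolding soc_representable_def by blast
next
  case (Suc n)
  have "soc_representable (\<lambda>x. (\<forall>i<n. S i x) \<and> S n x)"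
    using Suc by (intro soc_representable_conj) auto
  moreover have "(\<forall>i<Suc n. S i x) \<longleftrightarrow> (\<forall>i<n. S i x) \<and> S n x" for x
    by (auto simp: less_Suc_eq)
  ultimately show ?case by simp
qed

definition aff_var :: "nat \<Rightarrow> 'n::finite aff" where
  "aff_var k = (0, \<lambda>n. if n = k then 1 else 0, 0)"

definition aff_lin :: "real^'n::finite \<Rightarrow> real \<Rightarrow> 'n aff" where
  "aff_lin v c = (v, \<lambda>_. 0, c)"

definition aff_add :: "'n::finite aff \<Rightarrow> 'n aff \<Rightarrow> 'n aff" where
  "aff_add f g = (fst f + fst g, \<lambda>n. fst (snd f) n + fst (snd g) n, snd (snd f) + snd (snd g))"

definition aff_scale :: "real \<Rightarrow> 'n::finite aff \<Rightarrow> 'n aff" where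
  "aff_scale c f = (c *\<^sub>R fst f, \<lambda>n. c * fst (snd f) n, c * snd (snd f))"

definition aff_sum :: "('a \<Rightarrow> 'n::finite aff) \<Rightarrow> 'a set \<Rightarrow> 'n aff" where
  "aff_sum F S = (\<Sum>s\<in>S. fst (F s), \<lambda>n. \<Sum>s\<in>S. fst (snd (F s)) n, \<Sum>s\<in>S. snd (snd (F s)))"

lemma aff_eval_var [simp]: "k < N \<Longrightarrow> aff_eval N (aff_var k) x y = y k"
  by (simp add: aff_eval_def aff_var_def if_distrib[of "\<lambda>c. c * _"] cong: if_cong)

lemma aff_eval_lin [simp]: "aff_eval N (aff_lin v c) x y = v \<bullet> x + c"
  by (simp add: aff_eval_def aff_lin_def)

lemma aff_eval_add [simp]: "aff_eval N (aff_add f g) x y = aff_eval N f x y + aff_eval N g x y"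
  by (simp add: aff_eval_def aff_add_def inner_add_left sum.distrib algebra_simps)

lemma aff_eval_scale [simp]: "aff_eval N (aff_scale c f) x y = c * aff_eval N f x y"
  by (simp add: aff_eval_def aff_scale_def sum_distrib_left algebra_simps)

lemma aff_eval_sum [simp]:
  "finite S \<Longrightarrow> aff_eval N (aff_sum F S) x y = (\<Sum>s\<in>S. aff_eval N (F s) x y)"
  by (simp add: aff_eval_def aff_sum_def inner_sum_left sum.distrib sum_distrib_right
      sum.swap[of _ S])

lemma sum_box_ellipsoid_dual_le_iff_epigraph:
  fixes B :: "real^'n::finite^'n" and L U :: "nat \<Rightarrow> 'n \<Rightarrow> real" and l :: nat
  assumes d: "\<And>i. i < l \<Longrightarrow> 0 \<le> d i"
  shows "(\<exists>w. (\<Sum>i<l. box_ellipsoid_dual (L i) (U i) B ah (d i) x (w i)) \<le> s) \<longleftrightarrow>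
    (\<exists>w t v. (\<forall>i<l. norm (w i) \<le> t i \<and>
        (\<forall>j. L i j * (x - w i v* B) $ j \<le> v i j \<and> U i j * (x - w i v* B) $ j \<le> v i j)) \<and>
      (\<Sum>i<l. (\<Sum>j\<in>UNIV. v i j) + (B *v ah) \<bullet> w i + d i * t i) \<le> s)"
    (is "?dual \<longleftrightarrow> ?epigraph")
proof
  assume ?dual
  then obtain w where "(\<Sum>i<l. box_ellipsoid_dual (L i) (U i) B ah (d i) x (w i)) \<le> s" ..
  then show ?epigraph
    by (intro exI[of _ w] exI[of _ "\<lambda>i. norm (w i)"]
        exI[of _ "\<lambda>i j. max (L i j * (x - w i v* B) $ j) (U i j * (x - w i v* B) $ j)"])
      (simp add: box_ellipsoid_dual_def)
next
  assume ?epigraph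
  then obtain w t v where
    epi: "\<forall>i<l. norm (w i) \<le> t i \<and>
        (\<forall>j. L i j * (x - w i v* B) $ j \<le> v i j \<and> U i j * (x - w i v* B) $ j \<le> v i j)"
    and budget: "(\<Sum>i<l. (\<Sum>j\<in>UNIV. v i j) + (B *v ah) \<bullet> w i + d i * t i) \<le> s"
    by blast
  have "box_ellipsoid_dual (L i) (U i) B ah (d i) x (w i)
      \<le> (\<Sum>j\<in>UNIV. v i j) + (B *v ah) \<bullet> w i + d i * t i"
    if "i \<in> {..<l}" for i
    using epi d that unfolding box_ellipsoid_dual_def
    by (intro add_mono order_refl sum_mono mult_left_mono) auto
  then have "(\<Sum>i<l. box_ellipsoid_dual (L i) (U i) B ah (d i) x (w i)) \<le> s"
    using budget by (meson order_trans sum_mono)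
  then show ?dual by blast
qed

text \<open>Auxiliary variables of the cone program, for each level i: the coordinates of the
  multiplier w i, a bound t i on its norm, and bounds v i j on the box terms.\<close>
datatype 'n dual_var = Dual_w (level: nat) 'n | Dual_t (level: nat) | Dual_v (level: nat) 'n

instance dual_var :: (countable) countable
  by countable_datatype

lemma finite_dual_var_level_less: "finite {k :: 'n::finite dual_var. level k < l}"
proof (rule finite_subset)
  show "{k :: 'n dual_var. level k < l} \<subseteq>
    (\<lambda>(i, j). Dual_w i j) ` ({..<l} \<times> UNIV) \<union> Dual_t ` {..<l} \<union>
      (\<lambda>(i, j). Dual_v i j) ` ({..<l} \<times> UNIV)"
  proof
    fix k :: "'n dual_var" assume "k \<in> {k. level k < l}"
    then show "k \<in> (\<lambda>(i, j). Dual_w i j) ` ({..<l} \<times> UNIV) \<union> Dual_t ` {..<l} \<union>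
        (\<lambda>(i, j). Dual_v i j) ` ({..<l} \<times> UNIV)"
      by (cases k) (auto simp: image_iff)
  qed
qed simp

definition key_aff :: "'n::finite dual_var \<Rightarrow> 'n aff" where
  "key_aff k = aff_var (to_nat k)"

definition dual_decode ::
  "(nat \<Rightarrow> real) \<Rightarrow> (nat \<Rightarrow> real^'n::finite) \<times> (nat \<Rightarrow> real) \<times> (nat \<Rightarrow> 'n \<Rightarrow> real)" where
  "dual_decode y = (\<lambda>i. \<chi> j. y (to_nat (Dual_w i j)), \<lambda>i. y (to_nat (Dual_t i :: 'n dual_var)),
     \<lambda>i j. y (to_nat (Dual_v i j)))"

lemma surj_dual_decode: "surj dual_decode"
proof (rule surjI)
  fix z :: "(nat \<Rightarrow> real^'n) \<times> (nat \<Rightarrow> real) \<times> (nat \<Rightarrow> 'n \<Rightarrow> real)"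
  show "dual_decode (\<lambda>n. case from_nat n of Dual_w i j \<Rightarrow> fst z i $ j | Dual_t i \<Rightarrow> fst (snd z) i
      | Dual_v i j \<Rightarrow> snd (snd z) i j) = z"
    by (simp add: dual_decode_def)
qed

definition residual_aff :: "real^'n^'n \<Rightarrow> nat \<Rightarrow> 'n \<Rightarrow> 'n::finite aff" where
  "residual_aff B i j =
     aff_add (aff_lin (axis j 1) 0)
       (aff_sum (\<lambda>k. aff_scale (- B $ k $ j) (key_aff (Dual_w i k))) UNIV)"

definition norm_cone :: "'n list \<Rightarrow> nat \<Rightarrow> 'n::finite aff list \<times> 'n aff" where
  "norm_cone js i = (map (\<lambda>j. key_aff (Dual_w i j)) js, key_aff (Dual_t i))"

definition box_cut :: "real \<Rightarrow> real^'n^'n \<Rightarrow> nat \<Rightarrow> 'n \<Rightarrow> 'n::finite aff list \<times> 'n aff" where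
  "box_cut c B i j = ([], aff_add (key_aff (Dual_v i j)) (aff_scale (- c) (residual_aff B i j)))"

definition budget_cut ::
  "nat \<Rightarrow> real^'n^'n \<Rightarrow> real^'n \<Rightarrow> (nat \<Rightarrow> real) \<Rightarrow> real \<Rightarrow> 'n::finite aff list \<times> 'n aff" where
  "budget_cut l B ah d s = ([], aff_add (aff_lin 0 s) (aff_scale (-1) (aff_sum (\<lambda>i.
     aff_add (aff_sum (\<lambda>j. key_aff (Dual_v i j)) UNIV)
       (aff_add (aff_sum (\<lambda>k. aff_scale ((B *v ah) $ k) (key_aff (Dual_w i k))) UNIV)
         (aff_scale (d i) (key_aff (Dual_t i))))) {..<l})))"

context
  fixes N l :: nat and y :: "nat \<Rightarrow> real"
    and w :: "nat \<Rightarrow> real^'n::finite" and t :: "nat \<Rightarrow> real" and v :: "nat \<Rightarrow> 'n \<Rightarrow> real"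
  assumes N: "\<And>k :: 'n dual_var. level k < l \<Longrightarrow> to_nat k < N"
    and decode: "dual_decode y = (w, t, v)"
begin

lemma to_nat_dual_var_less:
  fixes j :: 'n
  shows "i < l \<Longrightarrow> to_nat (Dual_w i j) < N" "i < l \<Longrightarrow> to_nat (Dual_t i :: 'n dual_var) < N"
    "i < l \<Longrightarrow> to_nat (Dual_v i j) < N"
  using N by simp_all

lemma aff_eval_residual_aff:
  "i < l \<Longrightarrow> aff_eval N (residual_aff B i j) x y = (x - w i v* B) $ j"
  using decode
  by (auto simp: to_nat_dual_var_less residual_aff_def key_aff_def dual_decode_def inner_axis'
      vector_matrix_mult_def sum_negf mult.commute)

lemma soc_holds_norm_cone:
  fixes js :: "'n list"
  assumes "i < l" "set js = UNIV" "distinct js"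
  shows "soc_holds N (norm_cone js i) x y \<longleftrightarrow> norm (w i) \<le> t i"
  using assms decode
  by (auto simp: to_nat_dual_var_less soc_holds_def norm_cone_def key_aff_def dual_decode_def
      norm_vec_def L2_set_def sum_list_distinct_conv_sum_set)

lemma soc_holds_box_cut:
  "i < l \<Longrightarrow> soc_holds N (box_cut c B i j) x y \<longleftrightarrow> c * (x - w i v* B) $ j \<le> v i j"
  using decode
  by (auto simp: to_nat_dual_var_less box_cut_def soc_holds_Nil key_aff_def aff_eval_residual_aff
      dual_decode_def)

lemma soc_holds_budget_cut:
  "soc_holds N (budget_cut l B ah d s) x y \<longleftrightarrow>
     (\<Sum>i<l. (\<Sum>j\<in>UNIV. v i j) + (B *v ah) \<bullet> w i + d i * t i) \<le> s"
  using decode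
  by (auto simp: to_nat_dual_var_less budget_cut_def soc_holds_Nil key_aff_def inner_vec_def
      dual_decode_def add.assoc)

end

lemma soc_representable_sum_box_ellipsoid_dual:
  fixes B :: "real^'n::finite^'n" and L U :: "nat \<Rightarrow> 'n \<Rightarrow> real" and l :: nat
  assumes d: "\<And>i. i < l \<Longrightarrow> 0 \<le> d i"
  shows "soc_representable (\<lambda>x. \<exists>w. (\<Sum>i<l. box_ellipsoid_dual (L i) (U i) B ah (d i) x (w i)) \<le> s)"
proof -
  obtain N where N: "\<And>k :: 'n dual_var. level k < l \<Longrightarrow> to_nat k < N"
    using finite_nat_bounded[OF finite_imageI[OF finite_dual_var_level_less, of to_nat l]] by blast
  obtain js :: "'n list" where js: "set js = UNIV" "distinct js"
    using finite_distinct_list[of "UNIV :: 'n set"] by auto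
  define CS where "CS = norm_cone js ` {..<l} \<union> (\<lambda>(i, j). box_cut (L i j) B i j) ` ({..<l} \<times> UNIV)
      \<union> (\<lambda>(i, j). box_cut (U i j) B i j) ` ({..<l} \<times> UNIV) \<union> {budget_cut l B ah d s}"
  define E where "E x = (\<lambda>(w, t, v). (\<forall>i<l. norm (w i) \<le> t i \<and>
        (\<forall>j. L i j * (x - w i v* B) $ j \<le> v i j \<and> U i j * (x - w i v* B) $ j \<le> v i j)) \<and>
      (\<Sum>i<l. (\<Sum>j\<in>UNIV. v i j) + (B *v ah) \<bullet> w i + d i * t i) \<le> s)" for x
  have "soc_representable (\<lambda>x. \<exists>z. E x z)"
  proof (rule soc_representable_decode[OF _ surj_dual_decode])
    show "finite CS" by (simp add: CS_def)
    fix x y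
    obtain w :: "nat \<Rightarrow> real^'n" and t v where decode: "dual_decode y = (w, t, v)"
      by (metis prod_cases3)
    note sem = soc_holds_norm_cone[OF N decode _ js] soc_holds_box_cut[OF N decode]
      soc_holds_budget_cut[OF N decode]
    show "(\<forall>c\<in>CS. soc_holds N c x y) \<longleftrightarrow> E x (dual_decode y)"
      by (auto simp: CS_def ball_Un Ball_image_comp E_def decode sem)
  qed
  moreover have "(\<exists>w. (\<Sum>i<l. box_ellipsoid_dual (L i) (U i) B ah (d i) x (w i)) \<le> s) \<longleftrightarrow> (\<exists>z. E x z)"
    for x
    unfolding E_def
    by (subst sum_box_ellipsoid_dual_le_iff_epigraph[where d = d and l = l, OF d]) auto
  ultimately show ?thesis by simp
qed

theorem corollary2:
  fixes c :: "real^'n"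
    and m :: nat and b :: "nat \<Rightarrow> real" and l :: nat
    and ah :: "nat \<Rightarrow> real^'n"
    and lo hi :: "nat \<Rightarrow> 'n \<Rightarrow> real"
    and pa :: "nat \<Rightarrow> 'n \<Rightarrow> real \<Rightarrow> real"
    and G :: "nat \<Rightarrow> real" and pd :: "nat \<Rightarrow> real \<Rightarrow> real"
    and B :: "nat \<Rightarrow> real^'n^'n"
    and p :: nat and Gx :: "nat \<Rightarrow> real^'n" and hx :: "nat \<Rightarrow> real"
  assumes "l \<ge> 1"
    and "\<And>r j. r < m \<Longrightarrow> marg_poss (pa r j) (ah r $ j) (lo r j) (hi r j)"
    and "\<And>r. r < m \<Longrightarrow> dev_poss (pd r) (G r)"
  shows "\<exists>(N::nat) (cs :: ('n aff list \<times> 'n aff) list).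
           \<forall>x::real^'n.
             ((\<forall>i<p. Gx i \<bullet> x \<le> hx i) \<and>
              (\<forall>r<m. worst_exp (amb_set l (Cset (pa r) (ah r) (lo r) (hi r) (pd r) (G r) (B r))) x
                       \<le> b r))
             \<longleftrightarrow> (\<exists>y::nat \<Rightarrow> real. \<forall>k\<in>set cs. soc_holds N k x y)"
proof -
  have polyhedron: "soc_representable (\<lambda>x. \<forall>i<p. Gx i \<bullet> x \<le> hx i)"
    by (intro soc_representable_all_less soc_representable_halfspace)
  have robust: "soc_representable (\<lambda>x. \<forall>r<m.
      worst_exp (amb_set l (Cset (pa r) (ah r) (lo r) (hi r) (pd r) (G r) (B r))) x \<le> b r)"
  proof (rule soc_representable_all_less)
    fix r assume r: "r < m"
    note marg = assms(2)[OF r] and dev = assms(3)[OF r]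
    have "soc_representable (\<lambda>x. \<exists>w. (\<Sum>i<l. box_ellipsoid_dual
        (\<lambda>j. cut_lo (pa r j) (ah r $ j) (lo r j) (real i / real l))
        (\<lambda>j. cut_hi (pa r j) (ah r $ j) (hi r j) (real i / real l))
        (B r) (ah r) (dev_hi (pd r) (G r) (real i / real l)) x (w i)) \<le> real l * b r)"
      using dev_poss_dev_hi_bounds(1)[OF dev]
      by (intro soc_representable_sum_box_ellipsoid_dual) simp
    then show "soc_representable (\<lambda>x.
        worst_exp (amb_set l (Cset (pa r) (ah r) (lo r) (hi r) (pd r) (G r) (B r))) x \<le> b r)"
      by (simp add: worst_exp_le_iff_dual[OF assms(1) marg dev])
  qed
  show ?thesis
    using soc_representable_conj[OF polyhedron robust] unfolding soc_representable_def by blast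
qed

end
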